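(* For $i=1,\dots,M$, let $\mathcal Q_i$ be a symmetric positive semidefinite matrix and $C_i$ a matrix with full row rank (as defined in the context), let $Z_i$ be a matrix whose columns form an orthonormal basis of the null space of $C_i$, and assume $Z_i^\top\mathcal Q_iZ_i$ is positive definite and $\beta\in(0,1)$. For $\rho>0$ define \[ \Theta_i(\rho)=\Big\|\big(Z_i^\top(\tfrac1\rho\mathcal Q_i+I)Z_i\big)^{-1}-\tfrac12 I\Big\|_2 . \] Then the penalty parameters that optimize the worst-case convergence rate of Algorithm SE, i.e. that minimize $\|\tilde{\mathcal M}\|_2=\max_i\Theta_i(\rho_i)$ over $\rho_1,\dots,\rho_M>0$, are \[ \rho_i^\star=\sqrt{\operatorname{eig}_{\min}(Z_i^\top\mathcal Q_iZ_i)\,\operatorname{eig}_{\max}(Z_i^\top\mathcal Q_iZ_i)},\qquad i=1,\dots,M, \] and this choice does not depend on $\beta$.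
   Context: Setting: an MPC problem with dynamics $x^{k+1}=Ax^k+Bu^k$, horizon $N$, partitioned into subsystems $i=1,\dots,M$, is written as the stacked problem: minimize $\sum_i(\tfrac12y_i^\top\mathcal Q_iy_i+q_i^\top y_i+K_i)$ s.t. $C_iy_i=c_i$ (subsystem dynamics), $y_i\in\mathcal Y_i$ (convex constraint sets), $Dy=d$ (coupling), where $y_i=[y_i^1;\dots;y_i^N]$, $y_i^k=[u_i^k;w_i^k;x_i^{k+1}]$, $\mathcal Q_i=I_N\otimes\mathrm{diag}(R_i,0,Q_i)$, and $C_iy_i=c_i$ is the linear system $x_i^{k+1}=A_{ii}x_i^k+B_{ii}u_i^k+W_iw_i^k$, $k=1,\dots,N$ (initial state given). Algorithm SE is the ADMM scheme with subsystem penalty parameters $\rho_i>0$ and balancing parameter $\beta\in(0,1]$: (1) $y_i\leftarrow\arg\min_{C_iy_i=c_i}\tfrac12y_i^\top\mathcal Q_iy_i+q_i^\top y_i+\tfrac{\rho_i}2[\beta\|y_i-\zeta_i-\lambda_{\zeta_i}\|^2+(1-\beta)\|y_i-\epsilon_i-\lambda_{\epsilon_i}\|^2]$; (2) $\zeta_i\leftarrow\Pi_{\mathcal Y_i}(y_i-\lambda_{\zeta_i})$; (3) $\epsilon\leftarrow$ the projection of $y-\lambda_\epsilon$ onto $\{D\epsilon=d\}$ in the norm weighted by $(1-\beta)\mathrm{diag}(\rho_iI)$; (4) $\lambda_\zeta\leftarrow\lambda_\zeta-(y-\zeta)$, $\lambda_\epsilon\leftarrow\lambda_\epsilon-(y-\epsilon)$.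 Its worst-case convergence rate bound is governed by $\|\tilde{\mathcal M}\|_2$, where $\tilde{\mathcal M}=\mathrm{diag}_i\big(Z_i^\top\mathcal M_iZ_i-\tfrac12I\big)$ and $\mathcal M_i=Z_i\big(Z_i^\top(\tfrac1{\rho_i}\mathcal Q_i+I)Z_i\big)^{-1}Z_i^\top$; "optimal" means minimizing this quantity. $\operatorname{eig}_{\min},\operatorname{eig}_{\max}$ denote smallest and largest eigenvalues; $\|\cdot\|_2$ is the spectral norm. *)

theory Defs
  imports "Jordan_Normal_Form.DL_Rank" "Jordan_Normal_Form.Char_Poly" "Jordan_Normal_Form.Matrix_Kernel"
begin

definition vnorm :: "real vec \<Rightarrow> real" where
  "vnorm v = sqrt (v \<bullet> v)"

definition spec_norm :: "real mat \<Rightarrow> real" where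
  "spec_norm A = Sup {vnorm (A *\<^sub>v v) | v. v \<in> carrier_vec (dim_col A) \<and> vnorm v \<le> 1}"

definition inv_mat :: "real mat \<Rightarrow> real mat" where
  "inv_mat A = (SOME B. inverts_mat A B \<and> inverts_mat B A)"

definition sym_psd :: "real mat \<Rightarrow> bool" where
  "sym_psd A \<longleftrightarrow> square_mat A \<and> A\<^sup>T = A \<and>
     (\<forall>v \<in> carrier_vec (dim_row A). v \<bullet> (A *\<^sub>v v) \<ge> 0)"

definition sym_pd :: "real mat \<Rightarrow> bool" where
  "sym_pd A \<longleftrightarrow> square_mat A \<and> A\<^sup>T = A \<and>
     (\<forall>v \<in> carrier_vec (dim_row A). v \<noteq> 0\<^sub>v (dim_row A) \<longrightarrow> v \<bullet> (A *\<^sub>v v) > 0)"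

definition full_row_rank :: "real mat \<Rightarrow> bool" where
  "full_row_rank C \<longleftrightarrow> vec_space.rank (dim_row C) C = dim_row C"

definition orthonormal_null_basis :: "real mat \<Rightarrow> real mat \<Rightarrow> bool" where
  "orthonormal_null_basis Z C \<longleftrightarrow> dim_row Z = dim_col C \<and>
     Z\<^sup>T * Z = 1\<^sub>m (dim_col Z) \<and>
     {Z *\<^sub>v w | w. w \<in> carrier_vec (dim_col Z)} = mat_kernel C"

definition eig_min :: "real mat \<Rightarrow> real" where
  "eig_min A = Min {k. eigenvalue A k}"

definition eig_max :: "real mat \<Rightarrow> real" where
  "eig_max A = Max {k. eigenvalue A k}"

definition Theta :: "real mat \<Rightarrow> real mat \<Rightarrow> real \<Rightarrow> real" where
  "Theta Q Z \<rho> = spec_norm (inv_mat (Z\<^sup>T * ((1 / \<rho>) \<cdot>\<^sub>m Q + 1\<^sub>m (dim_row Q)) * Z)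
                      - (1/2) \<cdot>\<^sub>m 1\<^sub>m (dim_col Z))"

end

theory Submission
  imports Defs "Jordan_Normal_Form.Spectral_Radius"
begin

(* Write H = Z^T Q Z = U diag(lambda) U^T with U orthogonal; this spectral theorem is proved by
   deflation (complete a unit eigenvector to an orthogonal matrix by Gram-Schmidt and recurse on
   the complementary block), and positive definiteness makes every lambda_k positive.  Then
   Z^T (Q/rho + I) Z = U diag(lambda/rho + 1) U^T, so the matrix inside Theta(rho) is
   U diag(rho/(rho + lambda) - 1/2) U^T and Theta(rho) = max_k |rho - lambda_k| / (2 (rho + lambda_k)).
   For rho* = sqrt(lambda_min lambda_max) this maximum is attained at lambda_min and, with the same
   value, at lambda_max; raising rho increases the value at lambda_min and lowering it increases
   the value at lambda_max, so no rho does better.  The blocks are independent, hence rho_i* is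
   optimal for the maximum over i. *)

lemma real_scalar_prod_self_nonneg: "0 \<le> (v :: real vec) \<bullet> v"
  using conjugate_square_ge_0_vec[of v] by simp

lemma real_scalar_prod_self_eq_0_iff:
  "(v :: real vec) \<in> carrier_vec n \<Longrightarrow> v \<bullet> v = 0 \<longleftrightarrow> v = 0\<^sub>v n"
  using conjugate_square_eq_0_vec[of v n] by simp

lemma vnorm_smult: "vnorm (c \<cdot>\<^sub>v v) = \<bar>c\<bar> * vnorm v"
proof -
  have "(c \<cdot>\<^sub>v v) \<bullet> (c \<cdot>\<^sub>v v) = c\<^sup>2 * (v \<bullet> v)" by (simp add: power2_eq_square)
  thus ?thesis by (simp add: vnorm_def real_sqrt_mult)
qed

lemma orthogonal_mat_cancel_left_vec:
  fixes U :: "'a :: semiring_1 mat"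
  assumes "U \<in> carrier_mat m n" "U\<^sup>T * U = 1\<^sub>m n" "v \<in> carrier_vec n"
  shows "U\<^sup>T *\<^sub>v (U *\<^sub>v v) = v"
  using assms by (simp add: assoc_mult_mat_vec[symmetric, of "U\<^sup>T" n m U n v])

lemma vnorm_orthogonal_mult:
  assumes U: "U \<in> carrier_mat m n" and UU: "U\<^sup>T * U = 1\<^sub>m n" and v: "v \<in> carrier_vec n"
  shows "vnorm (U *\<^sub>v v) = vnorm v"
proof -
  have "(U *\<^sub>v v) \<bullet> (U *\<^sub>v v) = (U\<^sup>T *\<^sub>v (U *\<^sub>v v)) \<bullet> v"
    by (rule transpose_vec_mult_scalar[symmetric]) (use U v in auto)
  also have "U\<^sup>T *\<^sub>v (U *\<^sub>v v) = v"
    using U UU v by (rule orthogonal_mat_cancel_left_vec)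
  finally show ?thesis by (simp add: vnorm_def)
qed

lemma orthogonal_mat_right_inverse:
  fixes U :: "'a :: field mat"
  shows "U \<in> carrier_mat n n \<Longrightarrow> U\<^sup>T * U = 1\<^sub>m n \<Longrightarrow> U * U\<^sup>T = 1\<^sub>m n"
  using mat_mult_left_right_inverse[of "U\<^sup>T" n U] by simp

lemma orthogonal_mat_cancel_left:
  fixes W :: "'a :: semiring_1 mat"
  assumes "W \<in> carrier_mat n n" "W\<^sup>T * W = 1\<^sub>m n" and "X \<in> carrier_mat n k"
  shows "W\<^sup>T * (W * X) = X"
  using assms by (simp add: assoc_mult_mat[of "W\<^sup>T" n n W n X k, symmetric])

lemma orthogonal_similarity_inverse:
  fixes W :: "real mat"
  assumes W: "W \<in> carrier_mat n n" "W\<^sup>T * W = 1\<^sub>m n" and H: "H \<in> carrier_mat n n"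
  shows "W * (W\<^sup>T * H * W) * W\<^sup>T = H"
proof -
  note square = assoc_mult_mat[of _ n n _ n _ n] mult_carrier_mat[of _ n n _ n]
  have "W * (W\<^sup>T * H * W) * W\<^sup>T = (W * W\<^sup>T) * H * (W * W\<^sup>T)" using W H by (simp add: square)
  thus ?thesis using orthogonal_mat_right_inverse[OF W] H by simp
qed

lemma orthogonal_similarity_symmetric:
  fixes W :: "'a :: comm_semiring_0 mat"
  assumes W: "W \<in> carrier_mat n k" and H: "H \<in> carrier_mat n n" "H\<^sup>T = H"
  shows "(W\<^sup>T * H * W)\<^sup>T = W\<^sup>T * H * W"
proof -
  have "(W\<^sup>T * H * W)\<^sup>T = W\<^sup>T * (W\<^sup>T * H)\<^sup>T"
    by (rule transpose_mult[of _ k n _ k]) (use W H in auto)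
  also have "(W\<^sup>T * H)\<^sup>T = H * W"
    using transpose_mult[of "W\<^sup>T" k n H n] W H by simp
  finally show ?thesis using W H by simp
qed

section \<open>The spectral theorem for real symmetric matrices\<close>

lemma real_symmetric_complex_eigenvalue_real:
  fixes H :: "real mat"
  assumes H: "H \<in> carrier_mat n n" and sym: "H\<^sup>T = H"
    and a: "eigenvalue (map_mat complex_of_real H) a"
  shows "a \<in> \<real>"
proof -
  define Hc where "Hc = map_mat complex_of_real H"
  have Hc: "Hc \<in> carrier_mat n n" and Hc_sym: "Hc\<^sup>T = Hc"
    using H sym by (auto simp: Hc_def map_mat_transpose)
  obtain z where z: "z \<in> carrier_vec n" "z \<noteq> 0\<^sub>v n" and ev: "Hc *\<^sub>v z = a \<cdot>\<^sub>v z"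
    using a Hc unfolding Hc_def[symmetric] eigenvalue_def eigenvector_def by auto
  have conj_Hc: "Hc *\<^sub>v conjugate w = conjugate (Hc *\<^sub>v w)" if w: "w \<in> carrier_vec n" for w
  proof (rule eq_vecI)
    fix i assume "i < dim_vec (conjugate (Hc *\<^sub>v w))"
    hence i: "i < n" using Hc by simp
    have "conjugate (row Hc i) = row Hc i"
      using H i by (intro eq_vecI) (auto simp: Hc_def)
    thus "(Hc *\<^sub>v conjugate w) $ i = conjugate (Hc *\<^sub>v w) $ i"
      using i Hc w conjugate_sprod_vec[of "row Hc i" n w] by simp
  qed (use Hc in simp)
  have "a * (z \<bullet>c z) = (Hc *\<^sub>v z) \<bullet>c z"
    using z by (simp add: ev)
  also have "\<dots> = z \<bullet>c (Hc *\<^sub>v z)"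
    using transpose_vec_mult_scalar[OF Hc carrier_vec_conjugate[OF z(1)] z(1)] conj_Hc[OF z(1)]
    by (simp add: Hc_sym)
  also have "\<dots> = cnj a * (z \<bullet>c z)"
    using z by (simp add: ev conjugate_smult_vec)
  finally have "a = cnj a"
    using z conjugate_square_eq_0_vec[OF z(1)] by simp
  thus ?thesis using Reals_cnj_iff by metis
qed

lemma real_symmetric_has_unit_eigenvector:
  fixes H :: "real mat"
  assumes H: "H \<in> carrier_mat n n" and sym: "H\<^sup>T = H" and n: "n > 0"
  shows "\<exists>e v. v \<in> carrier_vec n \<and> v \<bullet> v = 1 \<and> H *\<^sub>v v = e \<cdot>\<^sub>v v"
proof -
  define Hc where "Hc = map_mat complex_of_real H"
  have Hc: "Hc \<in> carrier_mat n n" using H by (simp add: Hc_def)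
  obtain a where a: "eigenvalue Hc a"
    using spectrum_non_empty[OF Hc n] unfolding spectrum_def by auto
  then obtain e where "a = complex_of_real e"
    using real_symmetric_complex_eigenvalue_real[OF H sym] unfolding Hc_def by (auto elim: Reals_cases)
  with a have "poly (char_poly Hc) (complex_of_real e) = 0"
    using eigenvalue_root_char_poly[OF Hc] by simp
  hence "eigenvalue H e"
    unfolding eigenvalue_root_char_poly[OF H] Hc_def of_real_hom.char_poly_hom[OF H] by simp
  then obtain u where u: "u \<in> carrier_vec n" "u \<noteq> 0\<^sub>v n" and ev: "H *\<^sub>v u = e \<cdot>\<^sub>v u"
    using H unfolding eigenvalue_def eigenvector_def by auto
  have "u \<bullet> u > 0"
    using u real_scalar_prod_self_eq_0_iff[OF u(1)] real_scalar_prod_self_nonneg[of u] by linarith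
  hence "vnorm u > 0" by (simp add: vnorm_def)
  define v where "v = (1 / vnorm u) \<cdot>\<^sub>v u"
  have "v \<bullet> v = 1"
    using \<open>vnorm u > 0\<close> by (simp add: v_def vnorm_def real_scalar_prod_self_nonneg)
  moreover have "H *\<^sub>v v = e \<cdot>\<^sub>v v"
    unfolding v_def mult_mat_vec[OF H u(1)] ev by (auto simp: smult_smult_assoc mult.commute)
  moreover have "v \<in> carrier_vec n" using u(1) by (simp add: v_def)
  ultimately show ?thesis by blast
qed

lemma orthogonal_mat_of_normalized_cols:
  fixes ws :: "real vec list"
  assumes ws: "corthogonal ws" "set ws \<subseteq> carrier_vec n" "length ws = n"
  defines "W \<equiv> mat_of_cols n (map (\<lambda>w. (1 / vnorm w) \<cdot>\<^sub>v w) ws)"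
  shows "W \<in> carrier_mat n n" and "W\<^sup>T * W = 1\<^sub>m n"
    and "\<And>j. j < n \<Longrightarrow> col W j = (1 / vnorm (ws ! j)) \<cdot>\<^sub>v ws ! j"
proof -
  have ws_carrier: "ws ! i \<in> carrier_vec n" if "i < n" for i using that ws(2,3) by auto
  have ws_orth: "ws ! i \<bullet> ws ! j = 0 \<longleftrightarrow> i \<noteq> j" if "i < n" "j < n" for i j
    using ws(1) that ws(3) unfolding corthogonal_def by simp
  show W: "W \<in> carrier_mat n n"
    unfolding W_def using mat_of_cols_carrier(1)[of n "map (\<lambda>w. (1 / vnorm w) \<cdot>\<^sub>v w) ws"] ws(3) by simp
  show col_W: "col W j = (1 / vnorm (ws ! j)) \<cdot>\<^sub>v ws ! j" if "j < n" for j
    using that ws_carrier ws(3) by (simp add: W_def)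
  show "W\<^sup>T * W = 1\<^sub>m n"
  proof (rule eq_matI)
    fix i j assume "i < dim_row (1\<^sub>m n)" "j < dim_col (1\<^sub>m n)"
    hence i: "i < n" and j: "j < n" by auto
    have "(W\<^sup>T * W) $$ (i, j) = (ws ! i \<bullet> ws ! j) / (vnorm (ws ! i) * vnorm (ws ! j))"
      using W i j col_W ws_carrier[OF i] ws_carrier[OF j] by simp
    also have "\<dots> = 1\<^sub>m n $$ (i, j)"
    proof (cases "i = j")
      case True
      have "vnorm (ws ! i) * vnorm (ws ! i) = ws ! i \<bullet> ws ! i"
        by (simp add: vnorm_def real_scalar_prod_self_nonneg)
      thus ?thesis using True i ws_orth[OF i i] by simp
    qed (use ws_orth[OF i j] i j in simp)
    finally show "(W\<^sup>T * W) $$ (i, j) = 1\<^sub>m n $$ (i, j)" .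
  qed (use W in auto)
qed

lemma unit_vec_extends_to_orthogonal_mat:
  fixes v :: "real vec"
  assumes v: "v \<in> carrier_vec n" and vv: "v \<bullet> v = 1"
  shows "\<exists>W \<in> carrier_mat n n. W\<^sup>T * W = 1\<^sub>m n \<and> col W 0 = v"
proof -
  interpret cof_vec_space n "TYPE(real)" .
  have v0: "v \<noteq> 0\<^sub>v n" using vv by auto
  hence "n > 0" using v by (cases n) auto
  obtain b where b: "set b \<subseteq> carrier_vec n" "distinct b" "\<not> lin_dep (set b)" "length b = n"
    and hd_b: "hd b = v"
    using basis_completion[OF v v0] by blast
  define ws where "ws = gram_schmidt n b"
  have ws: "corthogonal ws" "set ws \<subseteq> carrier_vec n" "length ws = n"
    using gram_schmidt_result[OF b(1-3) ws_def] b(4) by auto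
  obtain vs where "b = v # vs" using hd_b b(4) \<open>n > 0\<close> by (cases b) auto
  hence "hd ws = v" using v by (simp add: ws_def)
  hence "ws ! 0 = v" using \<open>n > 0\<close> ws(3) by (metis hd_conv_nth list.size(3) not_less_zero)
  thus ?thesis
    using orthogonal_mat_of_normalized_cols[OF ws] \<open>n > 0\<close> vv by (auto simp: vnorm_def)
qed

lemma orthogonal_similarity_first_col:
  fixes W H :: "real mat"
  assumes W: "W \<in> carrier_mat n n" "W\<^sup>T * W = 1\<^sub>m n" and H: "H \<in> carrier_mat n n"
    and n: "0 < n" and ev: "H *\<^sub>v col W 0 = e \<cdot>\<^sub>v col W 0"
  shows "col (W\<^sup>T * H * W) 0 = e \<cdot>\<^sub>v unit_vec n 0"
proof -
  have "W\<^sup>T * H * W = W\<^sup>T * (H * W)" using H W by simp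
  hence "col (W\<^sup>T * H * W) 0 = W\<^sup>T *\<^sub>v (H *\<^sub>v col W 0)"
    using H W n col_mult2[of "W\<^sup>T" n n "H * W" n 0] col_mult2[of H n n W n 0] by simp
  also have "\<dots> = e \<cdot>\<^sub>v (W\<^sup>T *\<^sub>v col W 0)"
    using W n by (simp add: ev mult_mat_vec[of _ n n])
  also have "W\<^sup>T *\<^sub>v col W 0 = col (W\<^sup>T * W) 0"
    by (rule col_mult2[of _ n n _ n, symmetric]) (use W n in auto)
  finally show ?thesis using W n by simp
qed

lemma dim_mat_diag [simp]: "dim_row (mat_diag n f) = n" "dim_col (mat_diag n f) = n"
  by (simp_all add: mat_diag_def)

lemma symmetric_first_col_block:
  fixes A :: "real mat"
  assumes A: "A \<in> carrier_mat (Suc m) (Suc m)" "A\<^sup>T = A"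
    and col0: "col A 0 = e \<cdot>\<^sub>v unit_vec (Suc m) 0"
  defines "A1 \<equiv> mat m m (\<lambda>(i, j). A $$ (Suc i, Suc j))"
  shows "A = four_block_mat (mat_diag 1 (\<lambda>_. e)) (0\<^sub>m 1 m) (0\<^sub>m m 1) A1" and "A1\<^sup>T = A1"
proof -
  have sym: "A $$ (i, j) = A $$ (j, i)" if "i < Suc m" "j < Suc m" for i j
    using arg_cong[OF A(2), of "\<lambda>B. B $$ (j, i)"] that A(1) by simp
  have first: "A $$ (i, 0) = (if i = 0 then e else 0)" if "i < Suc m" for i
    using arg_cong[OF col0, of "\<lambda>x. x $ i"] that A(1) by (simp add: unit_vec_def)
  show "A = four_block_mat (mat_diag 1 (\<lambda>_. e)) (0\<^sub>m 1 m) (0\<^sub>m m 1) A1"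
  proof (rule eq_matI)
    fix i j assume "i < dim_row (four_block_mat (mat_diag 1 (\<lambda>_. e)) (0\<^sub>m 1 m) (0\<^sub>m m 1) A1)"
      "j < dim_col (four_block_mat (mat_diag 1 (\<lambda>_. e)) (0\<^sub>m 1 m) (0\<^sub>m m 1) A1)"
    hence i: "i < Suc m" and j: "j < Suc m" by (simp_all add: A1_def)
    show "A $$ (i, j) = four_block_mat (mat_diag 1 (\<lambda>_. e)) (0\<^sub>m 1 m) (0\<^sub>m m 1) A1 $$ (i, j)"
      using first[OF i] first[OF j] sym[OF i j] i j
      by (cases i; cases j) (auto simp: A1_def mat_diag_def)
  qed (use A in \<open>simp_all add: A1_def\<close>)
  show "A1\<^sup>T = A1"
  proof (rule eq_matI)
    fix i j assume "i < dim_row A1" "j < dim_col A1"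
    thus "A1\<^sup>T $$ (i, j) = A1 $$ (i, j)" using sym[of "Suc j" "Suc i"] by (simp add: A1_def)
  qed (simp_all add: A1_def)
qed

lemma orthogonal_diag_carrier:
  assumes "U \<in> carrier_mat n n"
  shows "U * mat_diag n f * U\<^sup>T \<in> carrier_mat n n"
  by (rule mult_carrier_mat[OF mult_carrier_mat[OF assms mat_diag_dim]]) (use assms in simp)

lemma block_orthogonal_diag:
  fixes V :: "real mat"
  assumes V: "V \<in> carrier_mat m m" "V\<^sup>T * V = 1\<^sub>m m"
  defines "B \<equiv> four_block_mat (1\<^sub>m 1) (0\<^sub>m 1 m) (0\<^sub>m m 1) V"
  shows "B \<in> carrier_mat (Suc m) (Suc m)" and "B\<^sup>T * B = 1\<^sub>m (Suc m)"
    and "four_block_mat (mat_diag 1 (\<lambda>_. e)) (0\<^sub>m 1 m) (0\<^sub>m m 1) (V * mat_diag m d * V\<^sup>T)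
         = B * mat_diag (Suc m) (case_nat e d) * B\<^sup>T"
proof -
  show "B \<in> carrier_mat (Suc m) (Suc m)"
    using four_block_carrier_mat[of "1\<^sub>m 1" 1 1 V m m] V by (simp add: B_def)
  have BT: "B\<^sup>T = four_block_mat (1\<^sub>m 1) (0\<^sub>m 1 m) (0\<^sub>m m 1) V\<^sup>T"
    using transpose_four_block_mat[of "1\<^sub>m 1" 1 1 "0\<^sub>m 1 m" m "0\<^sub>m m 1" m V] V by (simp add: B_def)
  note block_mult =
    mult_four_block_mat[where ?nr1.0=1 and ?n1.0=1 and ?n2.0=m and ?nr2.0=m and ?nc1.0=1 and ?nc2.0=m]
  show "B\<^sup>T * B = 1\<^sub>m (Suc m)"
    unfolding BT unfolding B_def using V by (simp add: block_mult)
  have D: "mat_diag (Suc m) (case_nat e d) =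
      four_block_mat (mat_diag 1 (\<lambda>_. e)) (0\<^sub>m 1 m) (0\<^sub>m m 1) (mat_diag m d)"
    by (rule eq_matI) (auto simp: mat_diag_def split: nat.split)
  have "V * mat_diag m d * V\<^sup>T \<in> carrier_mat m m" by (rule orthogonal_diag_carrier[OF V(1)])
  thus "four_block_mat (mat_diag 1 (\<lambda>_. e)) (0\<^sub>m 1 m) (0\<^sub>m m 1) (V * mat_diag m d * V\<^sup>T)
         = B * mat_diag (Suc m) (case_nat e d) * B\<^sup>T"
    unfolding BT D unfolding B_def using V by (simp add: block_mult)
qed

lemma orthogonal_mult_orthogonal_diag:
  fixes W B :: "real mat"
  assumes W: "W \<in> carrier_mat n n" "W\<^sup>T * W = 1\<^sub>m n" and B: "B \<in> carrier_mat n n" "B\<^sup>T * B = 1\<^sub>m n"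
  shows "(W * B)\<^sup>T * (W * B) = 1\<^sub>m n"
    and "W * (B * mat_diag n d * B\<^sup>T) * W\<^sup>T = (W * B) * mat_diag n d * (W * B)\<^sup>T"
proof -
  note square = assoc_mult_mat[of _ n n _ n _ n] mult_carrier_mat[of _ n n _ n]
  have WBT: "(W * B)\<^sup>T = B\<^sup>T * W\<^sup>T" by (rule transpose_mult) (use W B in auto)
  show "(W * B)\<^sup>T * (W * B) = 1\<^sub>m n"
    unfolding WBT using W B orthogonal_mat_cancel_left[OF W B(1)] by (simp add: square)
  show "W * (B * mat_diag n d * B\<^sup>T) * W\<^sup>T = (W * B) * mat_diag n d * (W * B)\<^sup>T"
    unfolding WBT using W B by (simp add: square)
qed

theorem real_symmetric_orthogonal_diagonalization:
  fixes H :: "real mat"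
  assumes "H \<in> carrier_mat n n" and "H\<^sup>T = H"
  shows "\<exists>U d. U \<in> carrier_mat n n \<and> U\<^sup>T * U = 1\<^sub>m n \<and> H = U * mat_diag n d * U\<^sup>T"
  using assms
proof (induction n arbitrary: H)
  case 0
  hence "H = 1\<^sub>m 0 * mat_diag 0 (\<lambda>_. 0) * (1\<^sub>m 0)\<^sup>T" by (intro eq_matI) auto
  thus ?case by (intro exI[of _ "1\<^sub>m 0"]) auto
next
  case (Suc m)
  note H = Suc.prems
  obtain e v where v: "v \<in> carrier_vec (Suc m)" "v \<bullet> v = 1" and ev: "H *\<^sub>v v = e \<cdot>\<^sub>v v"
    using real_symmetric_has_unit_eigenvector[OF H] by blast
  obtain W where W: "W \<in> carrier_mat (Suc m) (Suc m)" "W\<^sup>T * W = 1\<^sub>m (Suc m)" and Wv: "col W 0 = v"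
    using unit_vec_extends_to_orthogonal_mat[OF v] by blast
  define H1 where "H1 = mat m m (\<lambda>(i, j). (W\<^sup>T * H * W) $$ (Suc i, Suc j))"
  have "W\<^sup>T * H * W \<in> carrier_mat (Suc m) (Suc m)" using H W by simp
  note block = symmetric_first_col_block[OF this orthogonal_similarity_symmetric[OF W(1) H]
      orthogonal_similarity_first_col[OF W H(1) _ ev[folded Wv]], folded H1_def]
  obtain V d1 where V: "V \<in> carrier_mat m m" "V\<^sup>T * V = 1\<^sub>m m" and H1: "H1 = V * mat_diag m d1 * V\<^sup>T"
    using Suc.IH[OF _ block(2)] by (auto simp: H1_def)
  define B where "B = four_block_mat (1\<^sub>m 1) (0\<^sub>m 1 m) (0\<^sub>m m 1) V"
  note B = block_orthogonal_diag[OF V, folded B_def]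
  have "H = W * (W\<^sup>T * H * W) * W\<^sup>T" using orthogonal_similarity_inverse[OF W H(1)] by simp
  also have "\<dots> = W * (B * mat_diag (Suc m) (case_nat e d1) * B\<^sup>T) * W\<^sup>T"
    using block(1) B(3)[where e = e and d = d1] H1 by simp
  also have "\<dots> = (W * B) * mat_diag (Suc m) (case_nat e d1) * (W * B)\<^sup>T"
    by (rule orthogonal_mult_orthogonal_diag(2)[OF W B(1,2)])
  finally show ?case
    using orthogonal_mult_orthogonal_diag(1)[OF W B(1,2)] mult_carrier_mat[OF W(1) B(1)] by blast
qed

section \<open>Orthogonally diagonalised matrices\<close>

lemma smult_mat_mult_vec:
  "A \<in> carrier_mat nr nc \<Longrightarrow> v \<in> carrier_vec nc \<Longrightarrow> (c \<cdot>\<^sub>m A) *\<^sub>v v = c \<cdot>\<^sub>v (A *\<^sub>v v)"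
  by (intro eq_vecI) (auto simp: scalar_prod_def sum_distrib_left mult.assoc)

lemma mat_diag_mult_vec:
  fixes f :: "nat \<Rightarrow> 'a :: comm_semiring_1"
  assumes "v \<in> carrier_vec n"
  shows "mat_diag n f *\<^sub>v v = vec n (\<lambda>i. f i * v $ i)"
proof (rule eq_vecI)
  fix i assume "i < dim_vec (vec n (\<lambda>i. f i * v $ i))"
  hence i: "i < n" by simp
  have "row (mat_diag n f) i = f i \<cdot>\<^sub>v unit_vec n i"
    using i by (intro eq_vecI) (auto simp: mat_diag_def)
  thus "(mat_diag n f *\<^sub>v v) $ i = vec n (\<lambda>i. f i * v $ i) $ i" using i assms by simp
qed simp

lemma mat_diag_cong: "(\<And>i. i < n \<Longrightarrow> f i = g i) \<Longrightarrow> mat_diag n f = mat_diag n g"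
  by (intro eq_matI) (auto simp: mat_diag_def)

lemma mult_unit_vec_eq_col:
  fixes U :: "'a :: semiring_1 mat"
  assumes "U \<in> carrier_mat m n" "i < n"
  shows "U *\<^sub>v unit_vec n i = col U i"
  using assms col_mult2[of U m n "1\<^sub>m n" n i] right_mult_one_mat[of U m n] by simp

lemma col_mat_diag:
  fixes f :: "nat \<Rightarrow> 'a :: semiring_1"
  shows "i < n \<Longrightarrow> col (mat_diag n f) i = f i \<cdot>\<^sub>v unit_vec n i"
  by (intro eq_vecI) (auto simp: mat_diag_def)

lemma mat_diag_mult_unit_vec:
  fixes f :: "nat \<Rightarrow> 'a :: semiring_1"
  shows "i < n \<Longrightarrow> mat_diag n f *\<^sub>v unit_vec n i = f i \<cdot>\<^sub>v unit_vec n i"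
  using mult_unit_vec_eq_col[of "mat_diag n f" n n i] col_mat_diag[of i n f] by simp

lemma orthogonal_diag_mult_vec:
  assumes "U \<in> carrier_mat n n" "x \<in> carrier_vec n"
  shows "(U * mat_diag n f * U\<^sup>T) *\<^sub>v x = U *\<^sub>v (mat_diag n f *\<^sub>v (U\<^sup>T *\<^sub>v x))"
  using assms assoc_mult_mat_vec[of "U * mat_diag n f" n n "U\<^sup>T" n x]
    assoc_mult_mat_vec[of U n n "mat_diag n f" n "U\<^sup>T *\<^sub>v x"] by simp

lemma orthogonal_diag_mult_col:
  fixes U :: "real mat"
  assumes U: "U \<in> carrier_mat n n" "U\<^sup>T * U = 1\<^sub>m n" and i: "i < n"
  shows "(U * mat_diag n f * U\<^sup>T) *\<^sub>v col U i = f i \<cdot>\<^sub>v col U i"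
proof -
  have "U\<^sup>T *\<^sub>v col U i = unit_vec n i"
    using col_mult2[of "U\<^sup>T" n n U n i] U i by simp
  thus ?thesis
    using U i by (simp add: orthogonal_diag_mult_vec mat_diag_mult_unit_vec
        mult_mat_vec[of U n n] mult_unit_vec_eq_col)
qed

lemma vnorm_col_orthogonal_mat:
  assumes U: "U \<in> carrier_mat n n" "U\<^sup>T * U = 1\<^sub>m n" and i: "i < n"
  shows "vnorm (col U i) = 1"
proof -
  have "col U i \<bullet> col U i = (U\<^sup>T * U) $$ (i, i)" using U(1) i by simp
  also have "\<dots> = 1" using U(2) i by simp
  finally show ?thesis by (simp add: vnorm_def)
qed

lemma orthogonal_diag_eqI:
  fixes A U :: "real mat"
  assumes U: "U \<in> carrier_mat n n" "U\<^sup>T * U = 1\<^sub>m n" and A: "A \<in> carrier_mat n n"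
    and cols: "\<And>i. i < n \<Longrightarrow> A *\<^sub>v col U i = f i \<cdot>\<^sub>v col U i"
  shows "A = U * mat_diag n f * U\<^sup>T"
proof -
  have "A * U = U * mat_diag n f"
  proof (rule mat_col_eqI)
    fix i assume "i < dim_col (U * mat_diag n f)"
    hence i: "i < n" using U by simp
    have "col (U * mat_diag n f) i = U *\<^sub>v (f i \<cdot>\<^sub>v unit_vec n i)"
      using U i col_mult2[of U n n "mat_diag n f" n i] by (simp add: col_mat_diag)
    also have "\<dots> = f i \<cdot>\<^sub>v col U i"
      using U i by (simp add: mult_mat_vec[of U n n] mult_unit_vec_eq_col)
    finally show "col (A * U) i = col (U * mat_diag n f) i"
      using A U i cols[OF i] col_mult2[of A n n U n i] by simp
  qed (use A U in simp_all)
  hence "A * (U * U\<^sup>T) = U * mat_diag n f * U\<^sup>T"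
    using A U by (simp add: assoc_mult_mat[of A n n U n "U\<^sup>T" n, symmetric])
  thus ?thesis using A U orthogonal_mat_right_inverse[OF U] by simp
qed

lemma orthogonal_diag_mult:
  fixes U :: "real mat"
  assumes U: "U \<in> carrier_mat n n" "U\<^sup>T * U = 1\<^sub>m n"
  shows "(U * mat_diag n f * U\<^sup>T) * (U * mat_diag n g * U\<^sup>T) = U * mat_diag n (\<lambda>i. f i * g i) * U\<^sup>T"
proof (rule orthogonal_diag_eqI[OF U])
  fix i assume i: "i < n"
  have c: "col U i \<in> carrier_vec n" using U(1) i by simp
  have F: "U * mat_diag n f * U\<^sup>T \<in> carrier_mat n n" and G: "U * mat_diag n g * U\<^sup>T \<in> carrier_mat n n"
    using orthogonal_diag_carrier[OF U(1)] by blast+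
  have "((U * mat_diag n f * U\<^sup>T) * (U * mat_diag n g * U\<^sup>T)) *\<^sub>v col U i
      = (U * mat_diag n f * U\<^sup>T) *\<^sub>v (g i \<cdot>\<^sub>v col U i)"
    using assoc_mult_mat_vec[OF F G c] orthogonal_diag_mult_col[OF U i] by simp
  also have "\<dots> = (f i * g i) \<cdot>\<^sub>v col U i"
    using mult_mat_vec[OF F c] orthogonal_diag_mult_col[OF U i] by (simp add: smult_smult_assoc mult.commute)
  finally show "((U * mat_diag n f * U\<^sup>T) * (U * mat_diag n g * U\<^sup>T)) *\<^sub>v col U i = (f i * g i) \<cdot>\<^sub>v col U i" .
qed (rule mult_carrier_mat[OF orthogonal_diag_carrier[OF U(1)] orthogonal_diag_carrier[OF U(1)]])

lemma inv_mat_eqI: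
  assumes A: "A \<in> carrier_mat n n" and B: "B \<in> carrier_mat n n" and AB: "A * B = 1\<^sub>m n"
  shows "inv_mat A = B"
proof -
  have BA: "B * A = 1\<^sub>m n" by (rule mat_mult_left_right_inverse[OF A B AB])
  have "\<exists>B. inverts_mat A B \<and> inverts_mat B A"
    using A B AB BA unfolding inverts_mat_def by auto
  hence inv: "inverts_mat A (inv_mat A) \<and> inverts_mat (inv_mat A) A"
    unfolding inv_mat_def by (rule someI_ex)
  hence A_inv: "A * inv_mat A = 1\<^sub>m n" and inv_A: "inv_mat A * A = 1\<^sub>m (dim_row (inv_mat A))"
    using A unfolding inverts_mat_def by auto
  have "inv_mat A \<in> carrier_mat n n"
    using arg_cong[OF A_inv, of dim_col] arg_cong[OF inv_A, of dim_col] A by auto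
  hence "inv_mat A = inv_mat A * (A * B)" using AB by simp
  also have "\<dots> = (inv_mat A * A) * B"
    using A B \<open>inv_mat A \<in> carrier_mat n n\<close> by simp
  also have "\<dots> = B" using inv_A B \<open>inv_mat A \<in> carrier_mat n n\<close> by simp
  finally show ?thesis .
qed

lemma inv_mat_orthogonal_diag:
  fixes U :: "real mat"
  assumes U: "U \<in> carrier_mat n n" "U\<^sup>T * U = 1\<^sub>m n" and f: "\<And>i. i < n \<Longrightarrow> f i \<noteq> 0"
  shows "inv_mat (U * mat_diag n f * U\<^sup>T) = U * mat_diag n (\<lambda>i. 1 / f i) * U\<^sup>T"
proof (rule inv_mat_eqI)
  have "mat_diag n (\<lambda>i. f i * (1 / f i)) = 1\<^sub>m n"
    using f by (subst mat_diag_cong[of n _ "\<lambda>_. 1"]) auto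
  thus "(U * mat_diag n f * U\<^sup>T) * (U * mat_diag n (\<lambda>i. 1 / f i) * U\<^sup>T) = 1\<^sub>m n"
    using U orthogonal_mat_right_inverse[OF U] by (simp add: orthogonal_diag_mult)
qed (use U in auto)

lemma orthogonal_diag_smult_add_one:
  fixes U :: "real mat"
  assumes U: "U \<in> carrier_mat n n" "U\<^sup>T * U = 1\<^sub>m n"
  shows "c \<cdot>\<^sub>m (U * mat_diag n f * U\<^sup>T) + 1\<^sub>m n = U * mat_diag n (\<lambda>i. c * f i + 1) * U\<^sup>T"
proof (rule orthogonal_diag_eqI[OF U])
  fix i assume i: "i < n"
  have c: "col U i \<in> carrier_vec n" using U(1) i by simp
  note A = orthogonal_diag_carrier[OF U(1), of f]
  show "(c \<cdot>\<^sub>m (U * mat_diag n f * U\<^sup>T) + 1\<^sub>m n) *\<^sub>v col U i = (c * f i + 1) \<cdot>\<^sub>v col U i"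
    using A c orthogonal_diag_mult_col[OF U i]
    by (simp add: add_mult_distrib_mat_vec[of _ n n] smult_mat_mult_vec[of _ n n]
        smult_smult_assoc add_smult_distrib_vec)
qed (use orthogonal_diag_carrier[OF U(1)] in simp)

lemma orthogonal_diag_minus_smult_one:
  fixes U :: "real mat"
  assumes U: "U \<in> carrier_mat n n" "U\<^sup>T * U = 1\<^sub>m n"
  shows "U * mat_diag n f * U\<^sup>T - c \<cdot>\<^sub>m 1\<^sub>m n = U * mat_diag n (\<lambda>i. f i - c) * U\<^sup>T"
proof (rule orthogonal_diag_eqI[OF U])
  fix i assume i: "i < n"
  have c: "col U i \<in> carrier_vec n" using U(1) i by simp
  note A = orthogonal_diag_carrier[OF U(1), of f]
  show "(U * mat_diag n f * U\<^sup>T - c \<cdot>\<^sub>m 1\<^sub>m n) *\<^sub>v col U i = (f i - c) \<cdot>\<^sub>v col U i"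
  proof -
    have "(U * mat_diag n f * U\<^sup>T - c \<cdot>\<^sub>m 1\<^sub>m n) *\<^sub>v col U i = f i \<cdot>\<^sub>v col U i - c \<cdot>\<^sub>v col U i"
      using A c orthogonal_diag_mult_col[OF U i]
      by (simp add: minus_mult_distrib_mat_vec[of _ n n] smult_mat_mult_vec[of _ n n])
    also have "\<dots> = (f i - c) \<cdot>\<^sub>v col U i"
      using c by (intro eq_vecI) (auto simp: left_diff_distrib)
    finally show ?thesis .
  qed
qed (simp add: minus_carrier_mat)

lemma eigenvalue_orthogonal_diag_iff:
  fixes U :: "real mat"
  assumes U: "U \<in> carrier_mat n n" "U\<^sup>T * U = 1\<^sub>m n"
  shows "eigenvalue (U * mat_diag n f * U\<^sup>T) k \<longleftrightarrow> k \<in> f ` {..<n}"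
proof
  assume "eigenvalue (U * mat_diag n f * U\<^sup>T) k"
  then obtain x where x: "x \<in> carrier_vec n" "x \<noteq> 0\<^sub>v n"
    and ev: "(U * mat_diag n f * U\<^sup>T) *\<^sub>v x = k \<cdot>\<^sub>v x"
    using U unfolding eigenvalue_def eigenvector_def by auto
  define y where "y = U\<^sup>T *\<^sub>v x"
  have y: "y \<in> carrier_vec n" using U x by (simp add: y_def)
  have "U *\<^sub>v y = x"
    using U x orthogonal_mat_right_inverse[OF U] by (simp add: y_def assoc_mult_mat_vec[symmetric, of U n n])
  moreover have "U *\<^sub>v 0\<^sub>v n = 0\<^sub>v n" using U by (intro eq_vecI) auto
  ultimately have "y \<noteq> 0\<^sub>v n" using x(2) by auto
  have "\<exists>j<n. y $ j \<noteq> 0"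
  proof (rule ccontr)
    assume "\<not> (\<exists>j<n. y $ j \<noteq> 0)"
    hence "y = 0\<^sub>v n" using y by (intro eq_vecI) auto
    thus False using \<open>y \<noteq> 0\<^sub>v n\<close> by contradiction
  qed
  then obtain j where j: "j < n" "y $ j \<noteq> 0" by blast
  have "mat_diag n f *\<^sub>v y \<in> carrier_vec n" using y by (simp add: mat_diag_mult_vec)
  hence "mat_diag n f *\<^sub>v y = U\<^sup>T *\<^sub>v (U *\<^sub>v (mat_diag n f *\<^sub>v y))"
    using U by (simp add: orthogonal_mat_cancel_left_vec)
  also have "\<dots> = U\<^sup>T *\<^sub>v (k \<cdot>\<^sub>v x)"
    using U x ev by (simp add: y_def orthogonal_diag_mult_vec)
  also have "\<dots> = k \<cdot>\<^sub>v y"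
    using U x by (simp add: y_def mult_mat_vec[of "U\<^sup>T" n n])
  finally have "mat_diag n f *\<^sub>v y = k \<cdot>\<^sub>v y" .
  hence "(mat_diag n f *\<^sub>v y) $ j = (k \<cdot>\<^sub>v y) $ j" by simp
  hence "f j * y $ j = k * y $ j" using j y by (simp add: mat_diag_mult_vec)
  thus "k \<in> f ` {..<n}" using j by auto
next
  assume "k \<in> f ` {..<n}"
  then obtain i where "i < n" "k = f i" by auto
  moreover have "col U i \<noteq> 0\<^sub>v n"
    using vnorm_col_orthogonal_mat[OF U \<open>i < n\<close>] by (auto simp: vnorm_def)
  ultimately have "eigenvector (U * mat_diag n f * U\<^sup>T) (col U i) k"
    using U orthogonal_diag_mult_col[OF U] orthogonal_diag_carrier[OF U(1)]
    unfolding eigenvector_def by auto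
  thus "eigenvalue (U * mat_diag n f * U\<^sup>T) k" unfolding eigenvalue_def by blast
qed

lemma sym_pd_orthogonal_diagonalization:
  fixes H :: "real mat"
  assumes H: "H \<in> carrier_mat m m" and pd: "sym_pd H"
  obtains U d where "U \<in> carrier_mat m m" "U\<^sup>T * U = 1\<^sub>m m" "H = U * mat_diag m d * U\<^sup>T"
    and "\<And>i. i < m \<Longrightarrow> 0 < d i"
proof -
  have "H\<^sup>T = H" using pd unfolding sym_pd_def by simp
  then obtain U d where U: "U \<in> carrier_mat m m" "U\<^sup>T * U = 1\<^sub>m m" and H_eq: "H = U * mat_diag m d * U\<^sup>T"
    using real_symmetric_orthogonal_diagonalization[OF H] by blast
  have "0 < d i" if i: "i < m" for i
  proof -
    have u: "col U i \<in> carrier_vec m" "col U i \<bullet> col U i = 1"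
      using U i vnorm_col_orthogonal_mat[OF U i] by (auto simp: vnorm_def)
    hence "col U i \<noteq> 0\<^sub>v m" by auto
    hence "0 < col U i \<bullet> (H *\<^sub>v col U i)" using pd H u(1) unfolding sym_pd_def by auto
    also have "col U i \<bullet> (H *\<^sub>v col U i) = d i"
      using u by (simp add: H_eq orthogonal_diag_mult_col[OF U i])
    finally show ?thesis .
  qed
  with U H_eq show thesis using that by blast
qed

section \<open>The spectral norm\<close>

lemma vnorm_mat_diag_le:
  assumes v: "v \<in> carrier_vec n" and b: "0 \<le> b" "\<And>i. i < n \<Longrightarrow> \<bar>f i\<bar> \<le> b"
  shows "vnorm (mat_diag n f *\<^sub>v v) \<le> b * vnorm v"
proof -
  have "(mat_diag n f *\<^sub>v v) \<bullet> (mat_diag n f *\<^sub>v v) = (\<Sum>i<n. (f i)\<^sup>2 * (v $ i)\<^sup>2)"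
    using v by (simp add: mat_diag_mult_vec scalar_prod_def atLeast0LessThan power2_eq_square mult_ac)
  also have "\<dots> \<le> (\<Sum>i<n. b\<^sup>2 * (v $ i)\<^sup>2)"
  proof (intro sum_mono mult_right_mono)
    fix i assume "i \<in> {..<n}"
    hence "\<bar>f i\<bar>\<^sup>2 \<le> b\<^sup>2" using b(2) by (intro power_mono) auto
    thus "(f i)\<^sup>2 \<le> b\<^sup>2" by simp
  qed simp
  also have "\<dots> = b\<^sup>2 * (v \<bullet> v)"
    using v by (simp add: scalar_prod_def atLeast0LessThan power2_eq_square sum_distrib_left)
  finally have "sqrt ((mat_diag n f *\<^sub>v v) \<bullet> (mat_diag n f *\<^sub>v v)) \<le> sqrt (b\<^sup>2 * (v \<bullet> v))"
    by (rule real_sqrt_le_mono)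
  thus ?thesis using b(1) unfolding vnorm_def by (simp add: real_sqrt_mult)
qed

lemma spec_norm_le:
  assumes "0 \<le> b" and bound: "\<And>v. v \<in> carrier_vec (dim_col A) \<Longrightarrow> vnorm (A *\<^sub>v v) \<le> b * vnorm v"
  shows "spec_norm A \<le> b"
  unfolding spec_norm_def
proof (rule cSup_least)
  have "0\<^sub>v (dim_col A) \<in> carrier_vec (dim_col A) \<and> vnorm (0\<^sub>v (dim_col A)) \<le> 1"
    by (simp add: vnorm_def)
  thus "{vnorm (A *\<^sub>v v) |v. v \<in> carrier_vec (dim_col A) \<and> vnorm v \<le> 1} \<noteq> {}" by blast
next
  fix y assume "y \<in> {vnorm (A *\<^sub>v v) |v. v \<in> carrier_vec (dim_col A) \<and> vnorm v \<le> 1}"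
  then obtain v where v: "v \<in> carrier_vec (dim_col A)" "vnorm v \<le> 1" and y: "y = vnorm (A *\<^sub>v v)"
    by blast
  have "y \<le> b * vnorm v" using bound[OF v(1)] y by simp
  also have "\<dots> \<le> b" using v(2) \<open>0 \<le> b\<close> by (simp add: mult_left_le)
  finally show "y \<le> b" .
qed

lemma abs_eigenvalue_le_spec_norm:
  assumes bound: "\<And>v. v \<in> carrier_vec (dim_col A) \<Longrightarrow> vnorm (A *\<^sub>v v) \<le> b * vnorm v"
    and v: "v \<in> carrier_vec (dim_col A)" "v \<noteq> 0\<^sub>v (dim_col A)" and ev: "A *\<^sub>v v = c \<cdot>\<^sub>v v"
  shows "\<bar>c\<bar> \<le> spec_norm A"
proof -
  have "v \<bullet> v > 0"
    using v real_scalar_prod_self_eq_0_iff[OF v(1)] real_scalar_prod_self_nonneg[of v] by linarith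
  hence "vnorm v > 0" by (simp add: vnorm_def)
  define u where "u = (1 / vnorm v) \<cdot>\<^sub>v v"
  have u: "u \<in> carrier_vec (dim_col A)" "vnorm u = 1"
    using v(1) \<open>vnorm v > 0\<close> by (simp_all add: u_def vnorm_smult)
  have "A *\<^sub>v u = c \<cdot>\<^sub>v u"
    unfolding u_def mult_mat_vec[OF carrier_matI[OF refl refl] v(1)] ev
    by (rule eq_vecI) auto
  hence "vnorm (A *\<^sub>v u) = \<bar>c\<bar>" using u(2) by (simp add: vnorm_smult)
  moreover have "vnorm (A *\<^sub>v u) \<le> spec_norm A" unfolding spec_norm_def
  proof (rule cSup_upper)
    show "vnorm (A *\<^sub>v u) \<in> {vnorm (A *\<^sub>v v) |v. v \<in> carrier_vec (dim_col A) \<and> vnorm v \<le> 1}"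
      using u by auto
    show "bdd_above {vnorm (A *\<^sub>v v) |v. v \<in> carrier_vec (dim_col A) \<and> vnorm v \<le> 1}"
    proof (rule bdd_aboveI)
      fix y assume "y \<in> {vnorm (A *\<^sub>v v) |v. v \<in> carrier_vec (dim_col A) \<and> vnorm v \<le> 1}"
      then obtain w where w: "w \<in> carrier_vec (dim_col A)" "vnorm w \<le> 1" and y: "y = vnorm (A *\<^sub>v w)"
        by blast
      have "0 \<le> vnorm w" by (simp add: vnorm_def real_scalar_prod_self_nonneg)
      have "y \<le> b * vnorm w" using bound[OF w(1)] y by simp
      also have "\<dots> \<le> \<bar>b\<bar> * vnorm w" using \<open>0 \<le> vnorm w\<close> by (simp add: mult_right_mono)
      also have "\<dots> \<le> \<bar>b\<bar>" using w(2) \<open>0 \<le> vnorm w\<close> by (simp add: mult_left_le)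
      finally show "y \<le> \<bar>b\<bar>" .
    qed
  qed
  ultimately show ?thesis by simp
qed

lemma spec_norm_orthogonal_diag:
  fixes U :: "real mat"
  assumes U: "U \<in> carrier_mat n n" "U\<^sup>T * U = 1\<^sub>m n" and n: "0 < n"
  shows "spec_norm (U * mat_diag n f * U\<^sup>T) = (MAX i\<in>{..<n}. \<bar>f i\<bar>)"
proof -
  define b where "b = (MAX i\<in>{..<n}. \<bar>f i\<bar>)"
  have b_ge: "\<bar>f i\<bar> \<le> b" if "i < n" for i
    unfolding b_def using that by (intro Max_ge) auto
  obtain i0 where i0: "i0 < n" "\<bar>f i0\<bar> = b"
    using Max_in[of "(\<lambda>i. \<bar>f i\<bar>) ` {..<n}"] n unfolding b_def by fastforce
  have "0 \<le> b" using b_ge[OF n] by linarith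
  have UT: "U\<^sup>T \<in> carrier_mat n n" "(U\<^sup>T)\<^sup>T * U\<^sup>T = 1\<^sub>m n"
    using U orthogonal_mat_right_inverse[OF U] by auto
  have bound: "vnorm ((U * mat_diag n f * U\<^sup>T) *\<^sub>v x) \<le> b * vnorm x"
    if "x \<in> carrier_vec (dim_col (U * mat_diag n f * U\<^sup>T))" for x
  proof -
    have x: "x \<in> carrier_vec n" using that U by simp
    have "vnorm ((U * mat_diag n f * U\<^sup>T) *\<^sub>v x) = vnorm (mat_diag n f *\<^sub>v (U\<^sup>T *\<^sub>v x))"
      using U x by (simp add: orthogonal_diag_mult_vec vnorm_orthogonal_mult mat_diag_mult_vec)
    also have "\<dots> \<le> b * vnorm (U\<^sup>T *\<^sub>v x)"
      using UT x \<open>0 \<le> b\<close> b_ge by (intro vnorm_mat_diag_le) auto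
    also have "vnorm (U\<^sup>T *\<^sub>v x) = vnorm x" using vnorm_orthogonal_mult[OF UT x] .
    finally show ?thesis .
  qed
  have "b \<le> spec_norm (U * mat_diag n f * U\<^sup>T)"
  proof -
    have "col U i0 \<noteq> 0\<^sub>v n"
      using vnorm_col_orthogonal_mat[OF U i0(1)] by (auto simp: vnorm_def)
    thus ?thesis
      using abs_eigenvalue_le_spec_norm[OF bound _ _ orthogonal_diag_mult_col[OF U i0(1)]] U i0
      by simp
  qed
  thus ?thesis using spec_norm_le[OF \<open>0 \<le> b\<close> bound] unfolding b_def by linarith
qed

section \<open>The rate bound as a function of the penalty parameter\<close>

lemma compression_smult_add_one:
  fixes Q Z :: "real mat"
  assumes Q: "Q \<in> carrier_mat N N" and Z: "Z \<in> carrier_mat N m" and ZZ: "Z\<^sup>T * Z = 1\<^sub>m m"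
  shows "Z\<^sup>T * (c \<cdot>\<^sub>m Q + 1\<^sub>m N) * Z = c \<cdot>\<^sub>m (Z\<^sup>T * Q * Z) + 1\<^sub>m m"
proof -
  have ZT: "Z\<^sup>T \<in> carrier_mat m N" using Z by simp
  have "Z\<^sup>T * (c \<cdot>\<^sub>m Q + 1\<^sub>m N) = Z\<^sup>T * (c \<cdot>\<^sub>m Q) + Z\<^sup>T * 1\<^sub>m N"
    using ZT Q by (intro mult_add_distrib_mat) auto
  also have "\<dots> = c \<cdot>\<^sub>m (Z\<^sup>T * Q) + Z\<^sup>T"
    using ZT Q mult_smult_distrib[OF ZT Q] by simp
  finally have "Z\<^sup>T * (c \<cdot>\<^sub>m Q + 1\<^sub>m N) = c \<cdot>\<^sub>m (Z\<^sup>T * Q) + Z\<^sup>T" .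
  hence "Z\<^sup>T * (c \<cdot>\<^sub>m Q + 1\<^sub>m N) * Z = (c \<cdot>\<^sub>m (Z\<^sup>T * Q)) * Z + Z\<^sup>T * Z"
    using ZT Q Z by (simp add: add_mult_distrib_mat[of _ m N])
  also have "\<dots> = c \<cdot>\<^sub>m (Z\<^sup>T * Q * Z) + 1\<^sub>m m"
    using ZT Q Z ZZ by (simp add: mult_smult_assoc_mat[of _ m N])
  finally show ?thesis .
qed

definition theta_factor :: "real \<Rightarrow> real \<Rightarrow> real" where
  "theta_factor \<rho> t = \<bar>\<rho> - t\<bar> / (2 * (\<rho> + t))"

lemma Theta_orthogonal_diag:
  fixes Q Z U :: "real mat"
  assumes Q: "Q \<in> carrier_mat N N" and Z: "Z \<in> carrier_mat N m" "Z\<^sup>T * Z = 1\<^sub>m m"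
    and U: "U \<in> carrier_mat m m" "U\<^sup>T * U = 1\<^sub>m m" and H: "Z\<^sup>T * Q * Z = U * mat_diag m d * U\<^sup>T"
    and m: "0 < m" and d: "\<And>i. i < m \<Longrightarrow> 0 < d i" and \<rho>: "0 < \<rho>"
  shows "Theta Q Z \<rho> = (MAX t\<in>d ` {..<m}. theta_factor \<rho> t)"
proof -
  have shifted_pos: "1 / \<rho> * d i + 1 \<noteq> 0" if "i < m" for i
  proof -
    have "0 < d i / \<rho>" using d[OF that] \<rho> by simp
    thus ?thesis by simp
  qed
  have "Z\<^sup>T * ((1 / \<rho>) \<cdot>\<^sub>m Q + 1\<^sub>m (dim_row Q)) * Z = U * mat_diag m (\<lambda>i. 1 / \<rho> * d i + 1) * U\<^sup>T"
    using Q compression_smult_add_one[OF Q Z] H orthogonal_diag_smult_add_one[OF U] by simp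
  hence "Theta Q Z \<rho> = spec_norm (U * mat_diag m (\<lambda>i. 1 / (1 / \<rho> * d i + 1) - 1 / 2) * U\<^sup>T)"
    unfolding Theta_def using Z shifted_pos
    by (simp add: inv_mat_orthogonal_diag[OF U] orthogonal_diag_minus_smult_one[OF U])
  also have "\<dots> = (MAX i\<in>{..<m}. \<bar>1 / (1 / \<rho> * d i + 1) - 1 / 2\<bar>)"
    by (rule spec_norm_orthogonal_diag[OF U m])
  also have "\<dots> = (MAX i\<in>{..<m}. theta_factor \<rho> (d i))"
  proof (rule arg_cong[where f = Max], rule image_cong[OF refl])
    fix i assume "i \<in> {..<m}"
    hence "0 < d i" using d by simp
    hence "1 / (1 / \<rho> * d i + 1) - 1 / 2 = (\<rho> - d i) / (2 * (\<rho> + d i))"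
      using \<rho> by (simp add: field_simps)
    thus "\<bar>1 / (1 / \<rho> * d i + 1) - 1 / 2\<bar> = theta_factor \<rho> (d i)"
      using \<rho> \<open>0 < d i\<close> by (simp add: theta_factor_def)
  qed
  finally show ?thesis by (simp add: image_image)
qed

lemma sqrt_mult_between:
  assumes "0 < a" "a \<le> b"
  shows "a \<le> sqrt (a * b)" "sqrt (a * b) \<le> b"
proof -
  have "a * a \<le> a * b" "a * b \<le> b * b" using assms by (simp_all add: mult_left_mono mult_right_mono)
  thus "a \<le> sqrt (a * b)" "sqrt (a * b) \<le> b"
    using assms real_sqrt_le_mono[of "a * a" "a * b"] real_sqrt_le_mono[of "a * b" "b * b"] by auto
qed

lemma theta_factor_le_iff:
  assumes "0 < \<rho> + t" "0 < \<sigma> + s"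
  shows "theta_factor \<rho> t \<le> theta_factor \<sigma> s \<longleftrightarrow> \<bar>\<rho> - t\<bar> * (\<sigma> + s) \<le> \<bar>\<sigma> - s\<bar> * (\<rho> + t)"
  using assms by (auto simp: theta_factor_def divide_simps algebra_simps)

lemma theta_factor_sqrt_le_at_min:
  assumes "0 < a" "a \<le> t" "t \<le> b"
  shows "theta_factor (sqrt (a * b)) t \<le> theta_factor (sqrt (a * b)) a"
proof -
  define r where "r = sqrt (a * b)"
  have r: "a \<le> r" "r \<le> b" "r * r = a * b"
    using sqrt_mult_between[of a b] assms by (simp_all add: r_def)
  have "\<bar>r - t\<bar> * (r + a) \<le> (r - a) * (r + t)"
  proof (cases "t \<le> r")
    case True
    have "(r - a) * (r + t) - (r - t) * (r + a) = 2 * r * (t - a)" by (simp add: algebra_simps)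
    moreover have "0 \<le> 2 * r * (t - a)" using r assms by simp
    ultimately show ?thesis using True by simp
  next
    case False
    have "(r - a) * (r + t) - (t - r) * (r + a) = 2 * a * (b - t)" using r(3) by (simp add: algebra_simps)
    moreover have "0 \<le> 2 * a * (b - t)" using assms by simp
    ultimately show ?thesis using False by simp
  qed
  thus ?thesis unfolding r_def[symmetric] using r assms by (simp add: theta_factor_le_iff)
qed

lemma theta_factor_sqrt_le_max:
  assumes "0 < a" "a \<le> b" "0 < \<rho>"
  shows "theta_factor (sqrt (a * b)) a \<le> max (theta_factor \<rho> a) (theta_factor \<rho> b)"
proof -
  define r where "r = sqrt (a * b)"
  have r: "a \<le> r" "r \<le> b" "r * r = a * b"
    using sqrt_mult_between[of a b] assms by (simp_all add: r_def)
  show ?thesis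
  proof (cases "r \<le> \<rho>")
    case True
    have "(\<rho> - a) * (r + a) - (r - a) * (\<rho> + a) = 2 * a * (\<rho> - r)" by (simp add: algebra_simps)
    moreover have "0 \<le> 2 * a * (\<rho> - r)" using True assms by simp
    ultimately have "(r - a) * (\<rho> + a) \<le> (\<rho> - a) * (r + a)" by simp
    hence "theta_factor r a \<le> theta_factor \<rho> a" using r True assms by (simp add: theta_factor_le_iff)
    thus ?thesis unfolding r_def by simp
  next
    case False
    have "(b - \<rho>) * (r + a) - (r - a) * (\<rho> + b) = 2 * r * (r - \<rho>)" using r(3) by (simp add: algebra_simps)
    moreover have "0 \<le> 2 * r * (r - \<rho>)" using False r assms by simp
    ultimately have "(r - a) * (\<rho> + b) \<le> (b - \<rho>) * (r + a)" by simp
    hence "theta_factor r a \<le> theta_factor \<rho> b" using r False assms by (simp add: theta_factor_le_iff)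
    thus ?thesis unfolding r_def by simp
  qed
qed

lemma Max_theta_factor_sqrt_le:
  assumes S: "finite S" "S \<noteq> {}" "\<And>t. t \<in> S \<Longrightarrow> 0 < t" and \<rho>: "0 < \<rho>"
  shows "(MAX t\<in>S. theta_factor (sqrt (Min S * Max S)) t) \<le> (MAX t\<in>S. theta_factor \<rho> t)"
proof -
  have a: "Min S \<in> S" and b: "Max S \<in> S" using S by simp_all
  have "0 < Min S" using S(3)[OF a] .
  have "Min S \<le> Max S" using Min_le[OF S(1) b] .
  have "theta_factor (sqrt (Min S * Max S)) t \<le> theta_factor (sqrt (Min S * Max S)) (Min S)"
    if "t \<in> S" for t
    using theta_factor_sqrt_le_at_min[OF \<open>0 < Min S\<close> Min_le[OF S(1) that] Max_ge[OF S(1) that]] .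
  hence "(MAX t\<in>S. theta_factor (sqrt (Min S * Max S)) t) \<le> theta_factor (sqrt (Min S * Max S)) (Min S)"
    using S by (intro Max.boundedI) auto
  also have "\<dots> \<le> max (theta_factor \<rho> (Min S)) (theta_factor \<rho> (Max S))"
    by (rule theta_factor_sqrt_le_max) fact+
  also have "\<dots> \<le> (MAX t\<in>S. theta_factor \<rho> t)"
    using S a b by auto
  finally show ?thesis .
qed

lemma Max_image_mono:
  fixes f g :: "'a \<Rightarrow> 'b :: linorder"
  assumes "finite A" "A \<noteq> {}" "\<And>x. x \<in> A \<Longrightarrow> f x \<le> g x"
  shows "Max (f ` A) \<le> Max (g ` A)"
  using assms by (auto intro: order_trans[OF _ Max_ge])

theorem Theta_sqrt_eig_min_max_optimal:
  fixes Q Z :: "real mat"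
  assumes Q: "Q \<in> carrier_mat N N" and Z: "Z \<in> carrier_mat N m" "Z\<^sup>T * Z = 1\<^sub>m m"
    and m: "0 < m" and pd: "sym_pd (Z\<^sup>T * Q * Z)"
  defines "\<rho>\<^sub>0 \<equiv> sqrt (eig_min (Z\<^sup>T * Q * Z) * eig_max (Z\<^sup>T * Q * Z))"
  shows "0 < \<rho>\<^sub>0" and "\<And>\<rho>. 0 < \<rho> \<Longrightarrow> Theta Q Z \<rho>\<^sub>0 \<le> Theta Q Z \<rho>"
proof -
  have "Z\<^sup>T * Q * Z \<in> carrier_mat m m" using Q Z by simp
  then obtain U d where U: "U \<in> carrier_mat m m" "U\<^sup>T * U = 1\<^sub>m m"
    and H: "Z\<^sup>T * Q * Z = U * mat_diag m d * U\<^sup>T" and d: "\<And>i. i < m \<Longrightarrow> 0 < d i"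
    using sym_pd_orthogonal_diagonalization[OF _ pd] by blast
  define S where "S = d ` {..<m}"
  have S: "finite S" "S \<noteq> {}" "\<And>t. t \<in> S \<Longrightarrow> 0 < t" using m d by (auto simp: S_def)
  have "{k. eigenvalue (Z\<^sup>T * Q * Z) k} = S"
    unfolding H S_def using eigenvalue_orthogonal_diag_iff[OF U] by blast
  hence \<rho>\<^sub>0: "\<rho>\<^sub>0 = sqrt (Min S * Max S)" by (simp add: \<rho>\<^sub>0_def eig_min_def eig_max_def)
  have "0 < Min S" "Min S \<le> Max S" using S by simp_all
  thus "0 < \<rho>\<^sub>0" unfolding \<rho>\<^sub>0 by simp
  fix \<rho> :: real assume "0 < \<rho>"
  show "Theta Q Z \<rho>\<^sub>0 \<le> Theta Q Z \<rho>"
    using Theta_orthogonal_diag[OF Q Z U H m d] \<open>0 < \<rho>\<^sub>0\<close> \<open>0 < \<rho>\<close> Max_theta_factor_sqrt_le[OF S \<open>0 < \<rho>\<close>]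
    unfolding \<rho>\<^sub>0 S_def by simp
qed

theorem proposition2:
  fixes M :: nat and Q C Z :: "nat \<Rightarrow> real mat" and \<beta> :: real
  assumes M_pos: "M \<ge> 1"
    and Q_dim: "\<And>i. i < M \<Longrightarrow> Q i \<in> carrier_mat (dim_col (C i)) (dim_col (C i))"
    and Q_psd: "\<And>i. i < M \<Longrightarrow> sym_psd (Q i)"
    and C_rank: "\<And>i. i < M \<Longrightarrow> full_row_rank (C i)"
    and Z_basis: "\<And>i. i < M \<Longrightarrow> orthonormal_null_basis (Z i) (C i)"
    and Z_nontriv: "\<And>i. i < M \<Longrightarrow> dim_col (Z i) > 0"
    and ZQZ_pd: "\<And>i. i < M \<Longrightarrow> sym_pd ((Z i)\<^sup>T * Q i * Z i)"
    and \<beta>: "0 < \<beta>" "\<beta> < 1"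
  defines "\<rho>star \<equiv> \<lambda>i. sqrt (eig_min ((Z i)\<^sup>T * Q i * Z i) * eig_max ((Z i)\<^sup>T * Q i * Z i))"
  shows "(\<forall>i<M. \<rho>star i > 0) \<and>
         (\<forall>\<rho>. (\<forall>i<M. \<rho> i > 0) \<longrightarrow>
            Max {Theta (Q i) (Z i) (\<rho>star i) | i. i < M} \<le> Max {Theta (Q i) (Z i) (\<rho> i) | i. i < M})"
proof -
  \<comment> \<open>Theta involves neither \<open>\<beta>\<close> nor \<open>C i\<close> beyond its null-space basis \<open>Z i\<close>, and positive
     definiteness of \<open>(Z i)\<^sup>T * Q i * Z i\<close> makes \<open>Q_psd\<close> and \<open>C_rank\<close> unnecessary.\<close>
  have block: "0 < \<rho>star i \<and> (\<forall>\<rho>>0. Theta (Q i) (Z i) (\<rho>star i) \<le> Theta (Q i) (Z i) \<rho>)"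
    if i: "i < M" for i
  proof -
    have "Z i \<in> carrier_mat (dim_col (C i)) (dim_col (Z i))" "(Z i)\<^sup>T * Z i = 1\<^sub>m (dim_col (Z i))"
      using Z_basis[OF i] unfolding orthonormal_null_basis_def by auto
    from Theta_sqrt_eig_min_max_optimal[OF Q_dim[OF i] this Z_nontriv[OF i] ZQZ_pd[OF i]]
    show ?thesis unfolding \<rho>star_def by blast
  qed
  have "Max {Theta (Q i) (Z i) (\<rho>star i) | i. i < M} \<le> Max {Theta (Q i) (Z i) (\<rho> i) | i. i < M}"
    if "\<forall>i<M. 0 < \<rho> i" for \<rho>
  proof -
    have "{..<M} \<noteq> {}" using M_pos by (simp add: lessThan_empty_iff)
    hence "Max ((\<lambda>i. Theta (Q i) (Z i) (\<rho>star i)) ` {..<M}) \<le> Max ((\<lambda>i. Theta (Q i) (Z i) (\<rho> i)) ` {..<M})"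
      using block that by (intro Max_image_mono) auto
    moreover have "{f i | i. i < M} = f ` {..<M}" for f :: "nat \<Rightarrow> real" by auto
    ultimately show ?thesis by simp
  qed
  with block show ?thesis by blast
qed

end
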